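(* Under the standing assumptions, for any fixed $\lambda>0$, with $\eta_1=\frac1d+\frac{\lambda}{n^{1-(k-1)\alpha}\ln d}$, $$\sum_{0\le S\le n\eta_1}\Phi(S)\le \exp\left\{\frac{k\lambda p r}{1-p}\right\}+o(1)\quad (n\to\infty),$$ the sum being over integers $S$.
   Context: Parameters: integer $k\ge2$, constants $\alpha>0$, $r>0$, $0<p<1$; $d=n^{\alpha}$ (treated as an integer), $m=n\ln d$, $\tau=\frac1{1-p}$, $r_{cr}=\frac1{\ln\tau}$. Standing assumptions: $(2k-1)\alpha>1$, $k\alpha\le1$, $k\ge\frac{\tau\ln\tau}{\tau-1}$, and $r<r_{cr}$. Notation: $f(s)=1+\frac{p}{1-p}\cdot\frac{s^k-d^{-k}}{1-d^{-k}}$ for $s\in[0,1]$; $B(S)=\binom{n}{S}\left(\frac1d\right)^{S}\left(1-\frac1d\right)^{n-S}$; $W(S)=f(S/n)^{rm}$; $\Phi(S)=B(S)W(S)$ for $S=0,1,\dots,n$. Limits are as $n\to\infty$ with all constants fixed. *)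

theory Defs
  imports Complex_Main
begin

definition dd :: "real \<Rightarrow> nat \<Rightarrow> real" where
  "dd \<alpha> n = real n powr \<alpha>"

definition mm :: "real \<Rightarrow> nat \<Rightarrow> real" where
  "mm \<alpha> n = real n * ln (dd \<alpha> n)"

definition tau :: "real \<Rightarrow> real" where
  "tau p = 1 / (1 - p)"

definition r_cr :: "real \<Rightarrow> real" where
  "r_cr p = 1 / ln (tau p)"

definition ff :: "nat \<Rightarrow> real \<Rightarrow> real \<Rightarrow> nat \<Rightarrow> real \<Rightarrow> real" where
  "ff k \<alpha> p n s = 1 + p / (1 - p) *
     ((s ^ k - (1 / dd \<alpha> n) ^ k) / (1 - (1 / dd \<alpha> n) ^ k))"

definition BB :: "real \<Rightarrow> nat \<Rightarrow> nat \<Rightarrow> real" where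
  "BB \<alpha> n S = real (n choose S) * (1 / dd \<alpha> n) ^ S * (1 - 1 / dd \<alpha> n) ^ (n - S)"

definition WW :: "nat \<Rightarrow> real \<Rightarrow> real \<Rightarrow> real \<Rightarrow> nat \<Rightarrow> nat \<Rightarrow> real" where
  "WW k \<alpha> r p n S = ff k \<alpha> p n (real S / real n) powr (r * mm \<alpha> n)"

definition Phi :: "nat \<Rightarrow> real \<Rightarrow> real \<Rightarrow> real \<Rightarrow> nat \<Rightarrow> nat \<Rightarrow> real" where
  "Phi k \<alpha> r p n S = BB \<alpha> n S * WW k \<alpha> r p n S"

definition eta1 :: "nat \<Rightarrow> real \<Rightarrow> real \<Rightarrow> nat \<Rightarrow> real" where
  "eta1 k \<alpha> lam n = 1 / dd \<alpha> n
     + lam / (real n powr (1 - (real k - 1) * \<alpha>) * ln (dd \<alpha> n))"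

end

theory Submission
  imports Defs
begin

text \<open>For \<open>S \<le> n \<eta>\<^sub>1\<close>, monotonicity of \<open>f\<close> and \<open>ln x \<le> x - 1\<close> give
  \<open>W(S) \<le> exp(r m (f(\<eta>\<^sub>1) - 1))\<close>, and the binomial weights \<open>B(S)\<close> sum to 1, so the sum is
  at most \<open>exp(r m (f(\<eta>\<^sub>1) - 1))\<close>. Writing \<open>\<eta>\<^sub>1 = (1 + t)/d\<close> with
  \<open>t = \<lambda> n\<^sup>k\<^sup>\<alpha>\<^sup>-\<^sup>1 / ln d \<rightarrow> 0\<close> (this uses \<open>k \<alpha> \<le> 1\<close>), one has
  \<open>m (f(\<eta>\<^sub>1) - 1) = p/(1-p) \<cdot> m d\<^sup>-\<^sup>k t \<cdot> ((1+t)\<^sup>k - 1)/t / (1 - d\<^sup>-\<^sup>k)\<close> with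
  \<open>m d\<^sup>-\<^sup>k t = \<lambda>\<close>, so the exponent tends to \<open>k \<lambda> p r/(1-p)\<close>.\<close>

definition eta1_excess :: "nat \<Rightarrow> real \<Rightarrow> real \<Rightarrow> nat \<Rightarrow> real" where
  "eta1_excess k \<alpha> lam n = lam * real n powr (real k * \<alpha> - 1) / (\<alpha> * ln (real n))"

lemma inverse_dd_eq: "n > 0 \<Longrightarrow> 1 / dd \<alpha> n = real n powr (- \<alpha>)"
  by (simp add: dd_def powr_minus_divide)

lemma ln_dd: "n > 0 \<Longrightarrow> ln (dd \<alpha> n) = \<alpha> * ln (real n)"
  by (simp add: dd_def)

lemma eta1_eq_excess:
  assumes "n > 1" "\<alpha> > 0"
  shows "eta1 k \<alpha> lam n = 1 / dd \<alpha> n * (1 + eta1_excess k \<alpha> lam n)"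
proof -
  have "real n powr (- \<alpha>) * real n powr (real k * \<alpha> - 1) * real n powr (1 - (real k - 1) * \<alpha>) = 1"
    using assms by (simp add: powr_add[symmetric] algebra_simps)
  then show ?thesis
    using assms by (simp add: eta1_def eta1_excess_def inverse_dd_eq ln_dd field_simps)
qed

lemma mm_mult_eta1_excess:
  assumes "n > 1" "\<alpha> > 0"
  shows "mm \<alpha> n * (1 / dd \<alpha> n) ^ k * eta1_excess k \<alpha> lam n = lam"
proof -
  have "real n * (real n powr (- \<alpha>)) ^ k * real n powr (real k * \<alpha> - 1) = 1"
    using assms by (simp add: powr_power powr_add[symmetric] powr_mult_base algebra_simps)
  then show ?thesis
    using assms by (simp add: mm_def eta1_excess_def inverse_dd_eq ln_dd field_simps)
qed

lemma ff_minus_one_eq: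
  "ff k \<alpha> p n (1 / dd \<alpha> n * (1 + t)) - 1
     = p / (1 - p) * ((1 / dd \<alpha> n) ^ k * t) * (\<Sum>i<k. (1 + t) ^ i) / (1 - (1 / dd \<alpha> n) ^ k)"
proof -
  have "(y * (1 + t)) ^ k - y ^ k = y ^ k * t * (\<Sum>i<k. (1 + t) ^ i)" for y :: real
  proof -
    have "(y * (1 + t)) ^ k - y ^ k = y ^ k * ((1 + t) ^ k - 1)"
      by (simp add: power_mult_distrib right_diff_distrib)
    then show ?thesis
      using power_diff_1_eq[of "1 + t" k] by simp
  qed
  from this[of "1 / dd \<alpha> n"] show ?thesis
    unfolding ff_def by simp
qed

lemma inverse_dd_tendsto_zero: "\<alpha> > 0 \<Longrightarrow> (\<lambda>n. 1 / dd \<alpha> n) \<longlonglongrightarrow> 0"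
  by (rule Lim_transform_eventually[OF tendsto_neg_powr[OF _ filterlim_real_sequentially]])
     (auto simp: inverse_dd_eq intro: eventually_mono[OF eventually_gt_at_top[of 0]])

lemma eventually_inverse_dd_power_less:
  assumes "\<alpha> > 0" "k \<ge> 1" "c > 0"
  shows "\<forall>\<^sub>F n in sequentially. (1 / dd \<alpha> n) ^ k < c"
proof -
  have "(\<lambda>n. (1 / dd \<alpha> n) ^ k) \<longlonglongrightarrow> 0 ^ k"
    using assms(1) by (intro tendsto_power inverse_dd_tendsto_zero)
  then show ?thesis
    by (rule order_tendstoD(2)) (use assms in \<open>simp add: power_0_left\<close>)
qed

lemma eta1_excess_tendsto_zero:
  assumes "\<alpha> > 0" "real k * \<alpha> \<le> 1"
  shows "eta1_excess k \<alpha> lam \<longlonglongrightarrow> 0"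
proof -
  define u where "u n = real n powr (real k * \<alpha> - 1) * (inverse \<alpha> * inverse (ln (real n)))"
    for n :: nat
  have ln_top: "filterlim (\<lambda>n::nat. ln (real n)) at_top sequentially"
    using filterlim_compose[OF ln_at_top filterlim_real_sequentially] by (simp add: o_def)
  have "(\<lambda>n. inverse \<alpha> * inverse (ln (real n))) \<longlonglongrightarrow> inverse \<alpha> * 0"
    by (intro tendsto_intros tendsto_inverse_0_at_top ln_top)
  then have upper_lim: "(\<lambda>n. inverse \<alpha> * inverse (ln (real n))) \<longlonglongrightarrow> 0"
    by simp
  have bounds: "\<forall>\<^sub>F n in sequentially. 0 \<le> u n \<and> u n \<le> inverse \<alpha> * inverse (ln (real n))"
    using eventually_gt_at_top[of 1]
  proof eventually_elim
    case (elim n)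
    have "real n powr (real k * \<alpha> - 1) \<le> real n powr 0"
      using elim assms by (intro powr_mono) auto
    moreover have "0 \<le> inverse \<alpha> * inverse (ln (real n))"
      using elim assms by simp
    ultimately show ?case
      unfolding u_def using elim by (simp add: mult_left_le_one_le)
  qed
  have "u \<longlonglongrightarrow> 0"
    using bounds
    by (intro tendsto_sandwich[OF _ _ tendsto_const upper_lim]) (auto elim: eventually_mono)
  then have "(\<lambda>n. lam * u n) \<longlonglongrightarrow> lam * 0"
    by (intro tendsto_intros)
  moreover have "eta1_excess k \<alpha> lam = (\<lambda>n. lam * u n)"
    by (simp add: fun_eq_iff u_def eta1_excess_def divide_inverse)
  ultimately show ?thesis
    by simp
qed

lemma mm_ff_eta1_tendsto:
  assumes "k \<ge> 1" "\<alpha> > 0" "real k * \<alpha> \<le> 1"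
  shows "(\<lambda>n. mm \<alpha> n * (ff k \<alpha> p n (eta1 k \<alpha> lam n) - 1)) \<longlonglongrightarrow> real k * lam * p / (1 - p)"
proof -
  let ?y = "\<lambda>n. 1 / dd \<alpha> n" and ?t = "eta1_excess k \<alpha> lam"
  have "(\<lambda>n. p / (1 - p) * lam * (\<Sum>i<k. (1 + ?t n) ^ i) / (1 - ?y n ^ k))
      \<longlonglongrightarrow> p / (1 - p) * lam * (\<Sum>i<k. (1 + 0) ^ i) / (1 - 0 ^ k)"
    using assms by (intro tendsto_intros eta1_excess_tendsto_zero inverse_dd_tendsto_zero)
      (auto simp: power_0_left)
  moreover have "\<forall>\<^sub>F n in sequentially.
      p / (1 - p) * lam * (\<Sum>i<k. (1 + ?t n) ^ i) / (1 - ?y n ^ k)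
        = mm \<alpha> n * (ff k \<alpha> p n (eta1 k \<alpha> lam n) - 1)"
    using eventually_gt_at_top[of 1]
  proof eventually_elim
    case (elim n)
    have "mm \<alpha> n * (ff k \<alpha> p n (eta1 k \<alpha> lam n) - 1)
        = p / (1 - p) * (mm \<alpha> n * (?y n ^ k * ?t n)) * (\<Sum>i<k. (1 + ?t n) ^ i) / (1 - ?y n ^ k)"
      unfolding eta1_eq_excess[OF elim assms(2)] ff_minus_one_eq by (simp add: ac_simps)
    then show ?case
      using mm_mult_eta1_excess[OF elim assms(2), of k lam] by (simp add: mult.assoc)
  qed
  ultimately have "(\<lambda>n. mm \<alpha> n * (ff k \<alpha> p n (eta1 k \<alpha> lam n) - 1))
      \<longlonglongrightarrow> p / (1 - p) * lam * (\<Sum>i<k. (1 + 0) ^ i) / (1 - 0 ^ k)"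
    by (rule Lim_transform_eventually)
  moreover have "p / (1 - p) * lam * (\<Sum>i<k. (1 + 0 :: real) ^ i) / (1 - 0 ^ k) = real k * lam * p / (1 - p)"
    using assms(1) by (simp add: power_0_left)
  ultimately show ?thesis
    by simp
qed

lemma BB_nonneg: "\<alpha> \<ge> 0 \<Longrightarrow> 0 \<le> BB \<alpha> n S"
proof -
  assume "\<alpha> \<ge> 0"
  then have "1 / dd \<alpha> n \<le> 1"
    by (cases "n = 0") (auto simp: dd_def ge_one_powr_ge_zero)
  then show ?thesis
    by (simp add: BB_def dd_def)
qed

lemma sum_BB_eq_one: "(\<Sum>S\<in>{0..n}. BB \<alpha> n S) = 1"
  using binomial_ring[of "1 / dd \<alpha> n" "1 - 1 / dd \<alpha> n" n]
  by (simp add: BB_def atLeast0AtMost)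

lemma ff_pos:
  assumes "0 < p" "p < 1" "(1 / dd \<alpha> n) ^ k < 1 - p" "0 \<le> s"
  shows "0 < ff k \<alpha> p n s"
proof -
  let ?y = "(1 / dd \<alpha> n) ^ k"
  let ?D = "(1 - p) * (1 - ?y)"
  have "?D + p * (s ^ k - ?y) = (1 - p - ?y) + p * s ^ k"
    by (simp add: algebra_simps)
  moreover have "0 \<le> p * s ^ k"
    using assms by simp
  ultimately have "0 < ?D + p * (s ^ k - ?y)"
    using assms(3) by linarith
  moreover have "0 < ?D"
    using assms by simp
  moreover have "0 < 1 + X / D" if "0 < D + X" "0 < D" for D X :: real
    using that by (simp add: field_simps)
  ultimately have "0 < 1 + p * (s ^ k - ?y) / ?D"
    by blast
  then show ?thesis
    by (simp add: ff_def)
qed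

lemma ff_mono:
  assumes "0 \<le> p" "p < 1" "(1 / dd \<alpha> n) ^ k < 1" "0 \<le> s" "s \<le> s'"
  shows "ff k \<alpha> p n s \<le> ff k \<alpha> p n s'"
  using assms unfolding ff_def
  by (intro add_left_mono mult_left_mono divide_right_mono diff_right_mono power_mono) auto

lemma powr_le_exp_minus_one:
  fixes x y a :: real
  assumes "0 < x" "x \<le> y" "0 \<le> a"
  shows "x powr a \<le> exp (a * (y - 1))"
proof -
  have "x powr a = exp (a * ln x)"
    using assms by (simp add: powr_def)
  also have "\<dots> \<le> exp (a * (y - 1))"
    using ln_le_minus_one[OF assms(1)] assms by (intro exp_mono mult_left_mono) auto
  finally show ?thesis .
qed

lemma sum_Phi_le_exp:
  assumes "\<alpha> \<ge> 0" "r \<ge> 0" "0 < p" "p < 1" "n \<ge> 1" "(1 / dd \<alpha> n) ^ k < 1 - p"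
  shows "(\<Sum>S \<in> {S \<in> {0..n}. real S \<le> real n * \<eta>}. Phi k \<alpha> r p n S)
           \<le> exp (r * mm \<alpha> n * (ff k \<alpha> p n \<eta> - 1))"
proof -
  let ?E = "exp (r * mm \<alpha> n * (ff k \<alpha> p n \<eta> - 1))"
  have "1 \<le> dd \<alpha> n"
    unfolding dd_def using assms by (intro ge_one_powr_ge_zero) auto
  then have rm: "0 \<le> r * mm \<alpha> n"
    unfolding mm_def using assms(2) by simp
  have W: "WW k \<alpha> r p n S \<le> ?E" if "real S \<le> real n * \<eta>" for S
  proof -
    have s: "0 \<le> real S / real n" "real S / real n \<le> \<eta>"
      using that assms(5) by (simp_all add: pos_divide_le_eq mult.commute)
    have "0 < ff k \<alpha> p n (real S / real n)"
      using assms s by (intro ff_pos) auto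
    moreover have "ff k \<alpha> p n (real S / real n) \<le> ff k \<alpha> p n \<eta>"
      using assms s by (intro ff_mono) auto
    ultimately show ?thesis
      unfolding WW_def using rm by (rule powr_le_exp_minus_one)
  qed
  have "(\<Sum>S \<in> {S \<in> {0..n}. real S \<le> real n * \<eta>}. Phi k \<alpha> r p n S)
      \<le> (\<Sum>S \<in> {S \<in> {0..n}. real S \<le> real n * \<eta>}. BB \<alpha> n S * ?E)"
    unfolding Phi_def using W BB_nonneg[OF assms(1)] by (intro sum_mono mult_left_mono) auto
  also have "\<dots> \<le> (\<Sum>S\<in>{0..n}. BB \<alpha> n S * ?E)"
    using BB_nonneg[OF assms(1)] by (intro sum_mono2) auto
  also have "\<dots> = ?E"
    by (simp add: sum_distrib_right[symmetric] sum_BB_eq_one)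
  finally show ?thesis .
qed

theorem lemma4p3:
  fixes k :: nat and \<alpha> r p lam :: real
  assumes "k \<ge> 2" and "\<alpha> > 0" and "r > 0" and "0 < p" and "p < 1"
    and "(2 * real k - 1) * \<alpha> > 1" and "real k * \<alpha> \<le> 1"
    and "real k \<ge> tau p * ln (tau p) / (tau p - 1)"
    and "r < r_cr p"
    and "lam > 0"
  shows "\<exists>\<epsilon> :: nat \<Rightarrow> real. \<epsilon> \<longlonglongrightarrow> 0 \<and>
    (\<forall>\<^sub>F n in sequentially.
       (\<Sum>S \<in> {S \<in> {0..n}. real S \<le> real n * eta1 k \<alpha> lam n}. Phi k \<alpha> r p n S)
         \<le> exp (real k * lam * p * r / (1 - p)) + \<epsilon> n)"
proof -
  \<comment> \<open>Only \<open>k \<ge> 2\<close>, \<open>\<alpha> > 0\<close>, \<open>r > 0\<close>, \<open>0 < p < 1\<close> and \<open>k \<alpha> \<le> 1\<close> are needed here; the other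
    standing assumptions serve other parts of the paper.\<close>
  define C where "C = real k * lam * p * r / (1 - p)"
  define E where "E n = exp (r * mm \<alpha> n * (ff k \<alpha> p n (eta1 k \<alpha> lam n) - 1))" for n
  have "(\<lambda>n. mm \<alpha> n * (ff k \<alpha> p n (eta1 k \<alpha> lam n) - 1)) \<longlonglongrightarrow> real k * lam * p / (1 - p)"
    using assms by (intro mm_ff_eta1_tendsto) auto
  then have "(\<lambda>n. r * (mm \<alpha> n * (ff k \<alpha> p n (eta1 k \<alpha> lam n) - 1)))
      \<longlonglongrightarrow> r * (real k * lam * p / (1 - p))"
    by (rule tendsto_mult_left)
  from tendsto_exp[OF this] have "E \<longlonglongrightarrow> exp C"
    unfolding E_def C_def by (simp add: ac_simps)
  then have lim: "(\<lambda>n. E n - exp C) \<longlonglongrightarrow> 0"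
    by (rule LIM_zero)
  have small: "\<forall>\<^sub>F n in sequentially. (1 / dd \<alpha> n) ^ k < 1 - p"
    using assms by (intro eventually_inverse_dd_power_less) auto
  have "\<forall>\<^sub>F n in sequentially.
      (\<Sum>S \<in> {S \<in> {0..n}. real S \<le> real n * eta1 k \<alpha> lam n}. Phi k \<alpha> r p n S) \<le> exp C + (E n - exp C)"
    using small eventually_ge_at_top[of 1]
  proof eventually_elim
    case (elim n)
    then show ?case
      using assms sum_Phi_le_exp[where \<alpha> = \<alpha> and r = r and p = p and n = n and k = k]
      by (simp add: E_def)
  qed
  with lim show ?thesis
    unfolding C_def by blast
qed

end
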